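(* For $\sigma>0$ let $\mathcal H_\sigma$ denote the RKHS of the Gaussian kernel $k_\sigma(x,y) = \exp(-\|x-y\|^2/(2\sigma^2))$ on $\mathbb R^d$, with norm $\|\cdot\|_\sigma$. Let $x_1,\dots,x_m \in \mathbb R^d$, and let $f = \sum_i a_i k_\sigma(x_i,\cdot)$ and $g = \sum_j b_j k_\sigma(x_j,\cdot)$ with real coefficients $a_i, b_j$. Let $z_i = \phi_{\sqrt2\sigma}(x_i)$ denote the (possibly infinite-dimensional) feature vector of $x_i$ in $\mathcal H_{\sqrt2\sigma}$, so that $z_i^T z_j = k_{\sqrt2\sigma}(x_i,x_j)$. Define the operators $A = \sum_i a_i z_i z_i^T$ and $B = \sum_j b_j z_j z_j^T$. Then $$\|fg\|_{\sigma/\sqrt2}^2 = \operatorname{tr}(A^2B^2),\qquad \|f\|_\sigma^2 = \operatorname{tr}(A^2),\qquad \|g\|_\sigma^2 = \operatorname{tr}(B^2).$$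
   Context: $z_i z_i^T$ denotes the rank-one operator $v \mapsto \langle z_i, v\rangle z_i$ on the feature space, and $\operatorname{tr}$ is the trace of the resulting finite-rank operator. *)

theory Defs
  imports "HOL-Analysis.Analysis"
begin

definition gauss_kernel :: "real \<Rightarrow> 'a::real_normed_vector \<Rightarrow> 'a \<Rightarrow> real" where
  "gauss_kernel \<sigma> x y = exp (- (norm (x - y))\<^sup>2 / (2 * \<sigma>\<^sup>2))"

text \<open>Squared RKHS norm of f for the kernel k (Aronszajn characterisation):
  the least C such that C k(x,y) - f(x) f(y) is a positive semidefinite kernel,
  i.e. (sum c_i f(y_i))^2 <= C sum_ij c_i c_j k(y_i,y_j) for all finite
  families. f lies in the RKHS iff such a C exists.\<close>
definition rkhs_bound :: "('a \<Rightarrow> 'a \<Rightarrow> real) \<Rightarrow> ('a \<Rightarrow> real) \<Rightarrow> real \<Rightarrow> bool" where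
  "rkhs_bound k f C \<longleftrightarrow>
     (\<forall>(n::nat) (c::nat \<Rightarrow> real) (y::nat \<Rightarrow> 'a).
        (\<Sum>i<n. c i * f (y i))\<^sup>2 \<le> C * (\<Sum>i<n. \<Sum>j<n. c i * c j * k (y i) (y j)))"

definition in_rkhs :: "('a \<Rightarrow> 'a \<Rightarrow> real) \<Rightarrow> ('a \<Rightarrow> real) \<Rightarrow> bool" where
  "in_rkhs k f \<longleftrightarrow> (\<exists>C. rkhs_bound k f C)"

definition rkhs_norm_sq :: "('a \<Rightarrow> 'a \<Rightarrow> real) \<Rightarrow> ('a \<Rightarrow> real) \<Rightarrow> real" where
  "rkhs_norm_sq k f = Inf {C. rkhs_bound k f C}"

definition rank_one :: "'h::real_inner \<Rightarrow> 'h \<Rightarrow> 'h" where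
  "rank_one z v = (z \<bullet> v) *\<^sub>R z"

text \<open>Trace of a finite-rank operator: sum of <e, T e> over any finite orthonormal
  set E whose span contains the range of T (independent of the choice of E).\<close>
definition fr_trace :: "('h::real_inner \<Rightarrow> 'h) \<Rightarrow> real" where
  "fr_trace T = (THE t. \<forall>E. finite E \<and> pairwise orthogonal E \<and> (\<forall>e\<in>E. norm e = 1)
       \<and> range T \<subseteq> span E \<longrightarrow> t = (\<Sum>e\<in>E. e \<bullet> T e))"

end

theory Submission
  imports Defs
begin

(* The squared norm of a kernel expansion \<Sum>i \<alpha>_i k(p_i, .) in the RKHS of a positive
   semidefinite kernel k is the quadratic form \<Sum>ij \<alpha>_i \<alpha>_j k(p_i, p_j): the Aronszajn bound
   holds for it by Cauchy-Schwarz for the form, and cannot be smaller, as testing the bound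
   against the expansion itself shows. Every Gaussian kernel is positive semidefinite, being
   a rescaling of the Gram kernel of the given feature map.
   Since k_\<sigma> = (k_{\<surd>2\<sigma>})^2 = (z_i \<bullet> z_j)^2 on the sample points, this gives
   ||f||^2 = \<Sum>ij a_i a_j (z_i \<bullet> z_j)^2 = tr(A^2). A product of two Gaussians of width \<sigma> is
   k_{\<surd>2\<sigma>}(x_i, x_j) times a Gaussian of width \<sigma>/\<surd>2 centred at the midpoint, so fg is a
   kernel expansion for k_{\<sigma>/\<surd>2}; the exponents in its fourfold norm sum recombine,
   by a parallelogram identity, into the cycle (z_i \<bullet> z_k)(z_k \<bullet> z_l)(z_l \<bullet> z_j)(z_j \<bullet> z_i),
   which is tr(A^2 B^2). Traces are computed from tr(\<Sum>_k y_k w_k^T) = \<Sum>_k w_k \<bullet> y_k, valid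
   for every finite orthonormal set whose span contains the range because it can be
   extended to one containing all w_k and y_k. *)

definition orthonormal :: "'a::real_inner set \<Rightarrow> bool" where
  "orthonormal E \<longleftrightarrow> pairwise orthogonal E \<and> (\<forall>e\<in>E. norm e = 1)"

lemma orthonormal_inner:
  assumes "orthonormal E" "e \<in> E" "e' \<in> E"
  shows "e \<bullet> e' = (if e = e' then 1 else 0)"
  using assms by (auto simp: orthonormal_def pairwise_def orthogonal_def dot_square_norm)

lemma inner_orthonormal_sum:
  assumes "finite E" "orthonormal E" "e \<in> E"
  shows "e \<bullet> (\<Sum>e'\<in>E. c e' *\<^sub>R e') = c e"
  using assms by (simp add: inner_sum_right orthonormal_inner if_distrib cong: if_cong)

lemma orthonormal_span_expansion:
  assumes "finite E" "orthonormal E" "u \<in> span E"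
  shows "(\<Sum>e\<in>E. (e \<bullet> u) *\<^sub>R e) = u"
proof -
  obtain c where u: "u = (\<Sum>e\<in>E. c e *\<^sub>R e)"
    using assms(1,3) by (auto simp: span_finite)
  show ?thesis
    using assms(1,2) by (simp add: u inner_orthonormal_sum cong: sum.cong)
qed

lemma orthonormal_parseval:
  assumes "finite E" "orthonormal E" "u \<in> span E"
  shows "v \<bullet> u = (\<Sum>e\<in>E. (v \<bullet> e) * (e \<bullet> u))"
proof -
  have "v \<bullet> u = v \<bullet> (\<Sum>e\<in>E. (e \<bullet> u) *\<^sub>R e)"
    using orthonormal_span_expansion[OF assms] by simp
  then show ?thesis
    by (simp add: inner_sum_right mult.commute)
qed

lemma orthonormal_extend_vector:
  assumes "finite E" "orthonormal E"
  obtains E' where "E \<subseteq> E'" "finite E'" "orthonormal E'" "a \<in> span E'"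
proof (cases "a \<in> span E")
  case True
  then show ?thesis using that assms by blast
next
  case False
  define r where "r = a - (\<Sum>e\<in>E. (e \<bullet> a) *\<^sub>R e)"
  define u where "u = r /\<^sub>R norm r"
  have proj_in_span: "(\<Sum>e\<in>E. (e \<bullet> a) *\<^sub>R e) \<in> span E"
    by (intro span_sum span_scale span_base)
  then have "r \<noteq> 0"
    using False by (auto simp: r_def)
  have "e \<bullet> r = 0" if "e \<in> E" for e
    using assms that by (simp add: r_def inner_diff_right inner_orthonormal_sum)
  then have "orthogonal u e" if "e \<in> E" for e
    using that by (simp add: u_def orthogonal_def inner_commute)
  then have "orthonormal (insert u E)"
    using assms(2) \<open>r \<noteq> 0\<close>
    by (auto simp: orthonormal_def u_def intro: pairwise_orthogonal_insert)
  moreover have "a = norm r *\<^sub>R u + (\<Sum>e\<in>E. (e \<bullet> a) *\<^sub>R e)"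
    using \<open>r \<noteq> 0\<close> by (simp add: u_def r_def)
  then have "a \<in> span (insert u E)"
    using proj_in_span span_mono[of E "insert u E"]
    by (metis span_add span_base span_scale insertI1 subset_insertI subsetD)
  ultimately show ?thesis
    using that assms(1) by blast
qed

lemma orthonormal_extend:
  assumes "finite S" "finite E0" "orthonormal E0"
  obtains E where "E0 \<subseteq> E" "finite E" "orthonormal E" "S \<subseteq> span E"
proof -
  have "\<exists>E. E0 \<subseteq> E \<and> finite E \<and> orthonormal E \<and> S \<subseteq> span E"
    using assms(1)
  proof (induction S)
    case empty
    then show ?case using assms by blast
  next
    case (insert a S)
    then obtain E where E: "E0 \<subseteq> E" "finite E" "orthonormal E" "S \<subseteq> span E"
      by blast
    obtain E' where "E \<subseteq> E'" "finite E'" "orthonormal E'" "a \<in> span E'"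
      by (rule orthonormal_extend_vector[OF E(2,3)])
    then have "insert a S \<subseteq> span E'"
      using E(4) span_mono[of E E'] by blast
    then show ?case
      using E(1) \<open>E \<subseteq> E'\<close> \<open>finite E'\<close> \<open>orthonormal E'\<close> by blast
  qed
  then show ?thesis using that by blast
qed

definition outer_sum :: "'k set \<Rightarrow> ('k \<Rightarrow> 'h::real_inner) \<Rightarrow> ('k \<Rightarrow> 'h) \<Rightarrow> 'h \<Rightarrow> 'h" where
  "outer_sum K w y v = (\<Sum>k\<in>K. (w k \<bullet> v) *\<^sub>R y k)"

lemma sum_rank_one_eq_outer_sum:
  "(\<lambda>v. \<Sum>i\<in>K. a i *\<^sub>R rank_one (z i) v) = outer_sum K (\<lambda>i. a i *\<^sub>R z i) z"
  by (simp add: fun_eq_iff outer_sum_def rank_one_def)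

lemma outer_sum_comp:
  assumes "finite K" "finite L"
  shows "outer_sum K w y \<circ> outer_sum L u t
       = outer_sum (K \<times> L) (\<lambda>(k, l). (w k \<bullet> t l) *\<^sub>R u l) (\<lambda>(k, l). y k)"
  using assms
  by (auto simp: outer_sum_def fun_eq_iff inner_sum_right scaleR_sum_left sum.cartesian_product
      intro!: sum.cong)

lemma outer_sum_diagonal_sum:
  assumes "finite K" "finite E" "orthonormal E" "range (outer_sum K w y) \<subseteq> span E"
  shows "(\<Sum>e\<in>E. e \<bullet> outer_sum K w y e) = (\<Sum>k\<in>K. w k \<bullet> y k)"
proof -
  obtain F where F: "E \<subseteq> F" "finite F" "orthonormal F" "w ` K \<union> y ` K \<subseteq> span F"
    using orthonormal_extend[of "w ` K \<union> y ` K" E] assms(1-3) by blast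
  have "(\<Sum>f\<in>F. f \<bullet> outer_sum K w y f) = (\<Sum>k\<in>K. \<Sum>f\<in>F. (w k \<bullet> f) * (f \<bullet> y k))"
    by (simp add: outer_sum_def inner_sum_right sum.swap[of _ F] mult.commute)
  also have "\<dots> = (\<Sum>k\<in>K. w k \<bullet> y k)"
    using F by (intro sum.cong refl orthonormal_parseval[symmetric]) auto
  finally have trace_F: "(\<Sum>f\<in>F. f \<bullet> outer_sum K w y f) = (\<Sum>k\<in>K. w k \<bullet> y k)" .
  have "f \<bullet> outer_sum K w y f = 0" if "f \<in> F - E" for f
  proof (rule orthogonal_to_span[of _ E, unfolded orthogonal_def])
    show "outer_sum K w y f \<in> span E"
      using assms(4) by auto
    show "f \<bullet> e = 0" if "e \<in> E" for e
      using orthonormal_inner[OF F(3), of f e] \<open>f \<in> F - E\<close> F(1) that by auto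
  qed
  then have "(\<Sum>f\<in>F. f \<bullet> outer_sum K w y f) = (\<Sum>e\<in>E. e \<bullet> outer_sum K w y e)"
    using F(1,2) by (intro sum.mono_neutral_right) auto
  then show ?thesis
    using trace_F by simp
qed

lemma fr_trace_outer_sum:
  assumes "finite K"
  shows "fr_trace (outer_sum K w y) = (\<Sum>k\<in>K. w k \<bullet> y k)"
proof -
  obtain E where E: "finite E" "orthonormal E" "y ` K \<subseteq> span E"
    using orthonormal_extend[of "y ` K" "{}"] assms by (auto simp: orthonormal_def)
  then have "range (outer_sum K w y) \<subseteq> span E"
    by (auto simp: outer_sum_def intro!: span_sum span_scale)
  show ?thesis
    unfolding fr_trace_def
  proof (rule the_equality)
    show "\<forall>E. finite E \<and> pairwise orthogonal E \<and> (\<forall>e\<in>E. norm e = 1)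
        \<and> range (outer_sum K w y) \<subseteq> span E \<longrightarrow> (\<Sum>k\<in>K. w k \<bullet> y k) = (\<Sum>e\<in>E. e \<bullet> outer_sum K w y e)"
      by (auto simp: orthonormal_def intro!: outer_sum_diagonal_sum[OF assms, symmetric])
  next
    fix t
    assume "\<forall>E. finite E \<and> pairwise orthogonal E \<and> (\<forall>e\<in>E. norm e = 1)
        \<and> range (outer_sum K w y) \<subseteq> span E \<longrightarrow> t = (\<Sum>e\<in>E. e \<bullet> outer_sum K w y e)"
    then have "t = (\<Sum>e\<in>E. e \<bullet> outer_sum K w y e)"
      using E \<open>range (outer_sum K w y) \<subseteq> span E\<close> by (auto simp: orthonormal_def)
    then show "t = (\<Sum>k\<in>K. w k \<bullet> y k)"
      using E \<open>range (outer_sum K w y) \<subseteq> span E\<close>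
      by (simp add: outer_sum_diagonal_sum[OF assms])
  qed
qed

definition psd_kernel :: "('a \<Rightarrow> 'a \<Rightarrow> real) \<Rightarrow> bool" where
  "psd_kernel k \<longleftrightarrow>
     (\<forall>(n::nat) (c::nat \<Rightarrow> real) (y::nat \<Rightarrow> 'a).
        0 \<le> (\<Sum>i<n. \<Sum>j<n. c i * c j * k (y i) (y j)))"

lemma psd_kernel_sum:
  assumes "psd_kernel k" "finite I"
  shows "0 \<le> (\<Sum>i\<in>I. \<Sum>j\<in>I. c i * c j * k (p i) (p j))"
proof -
  obtain h where h: "bij_betw h {..<card I} I"
    using ex_bij_betw_nat_finite[OF assms(2)] by (auto simp: atLeast0LessThan)
  have "0 \<le> (\<Sum>s<card I. \<Sum>t<card I. c (h s) * c (h t) * k (p (h s)) (p (h t)))"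
    using assms(1)[unfolded psd_kernel_def, rule_format,
        where n = "card I" and c = "c \<circ> h" and y = "p \<circ> h"]
    by simp
  then show ?thesis
    by (simp add: sum.reindex_bij_betw[OF h, symmetric])
qed

lemma rkhs_bound_sum:
  assumes "rkhs_bound k f C" "finite I"
  shows "(\<Sum>i\<in>I. c i * f (p i))\<^sup>2 \<le> C * (\<Sum>i\<in>I. \<Sum>j\<in>I. c i * c j * k (p i) (p j))"
proof -
  obtain h where h: "bij_betw h {..<card I} I"
    using ex_bij_betw_nat_finite[OF assms(2)] by (auto simp: atLeast0LessThan)
  have "(\<Sum>s<card I. c (h s) * f (p (h s)))\<^sup>2
      \<le> C * (\<Sum>s<card I. \<Sum>t<card I. c (h s) * c (h t) * k (p (h s)) (p (h t)))"
    using assms(1)[unfolded rkhs_bound_def, rule_format,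
        where n = "card I" and c = "c \<circ> h" and y = "p \<circ> h"]
    by simp
  then show ?thesis
    by (simp add: sum.reindex_bij_betw[OF h, symmetric])
qed

lemma psd_kernel_inner: "psd_kernel (\<lambda>p q. \<phi> p \<bullet> \<phi> q)"
  unfolding psd_kernel_def
proof (intro allI)
  fix n c and y :: "nat \<Rightarrow> 'a"
  have "(\<Sum>i<n. \<Sum>j<n. c i * c j * (\<phi> (y i) \<bullet> \<phi> (y j)))
      = (\<Sum>i<n. c i *\<^sub>R \<phi> (y i)) \<bullet> (\<Sum>j<n. c j *\<^sub>R \<phi> (y j))"
    unfolding inner_sum_left by (simp add: inner_sum_right sum_distrib_left mult_ac)
  then show "0 \<le> (\<Sum>i<n. \<Sum>j<n. c i * c j * (\<phi> (y i) \<bullet> \<phi> (y j)))"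
    by simp
qed

lemma psd_kernel_compose:
  assumes "psd_kernel k" and "\<And>p q. k' p q = k (h p) (h q)"
  shows "psd_kernel k'"
  using assms(1)[unfolded psd_kernel_def, rule_format, where y = "h \<circ> _"]
  by (simp add: psd_kernel_def assms(2))

lemma quadratic_nonneg_imp_discriminant:
  fixes Q S R :: real
  assumes nonneg: "\<And>t. 0 \<le> Q + 2 * t * S + t\<^sup>2 * R" and "0 \<le> R"
  shows "S\<^sup>2 \<le> Q * R"
proof (cases "R = 0")
  case True
  show ?thesis
  proof (cases "S = 0")
    case False
    have "0 \<le> Q + 2 * (- (Q + 1) / (2 * S)) * S"
      using nonneg[of "- (Q + 1) / (2 * S)"] True by simp
    then show ?thesis using False by (simp add: field_simps)
  qed (use True in simp)
next
  case False
  with \<open>0 \<le> R\<close> have "0 < R" by simp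
  have "0 \<le> Q + 2 * (- S / R) * S + (- S / R)\<^sup>2 * R"
    by (rule nonneg)
  then show ?thesis
    using \<open>0 < R\<close> by (simp add: field_simps power2_eq_square)
qed

lemma psd_kernel_cauchy_schwarz:
  assumes "psd_kernel k" and sym: "\<And>p q. k p q = k q p" and "finite I" "finite J"
  shows "(\<Sum>i\<in>I. \<Sum>j\<in>J. \<alpha> i * \<beta> j * k (p i) (q j))\<^sup>2
       \<le> (\<Sum>i\<in>I. \<Sum>i'\<in>I. \<alpha> i * \<alpha> i' * k (p i) (p i'))
         * (\<Sum>j\<in>J. \<Sum>j'\<in>J. \<beta> j * \<beta> j' * k (q j) (q j'))"
proof (rule quadratic_nonneg_imp_discriminant)
  show "0 \<le> (\<Sum>j\<in>J. \<Sum>j'\<in>J. \<beta> j * \<beta> j' * k (q j) (q j'))"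
    using assms(1,4) by (rule psd_kernel_sum)
next
  fix t
  let ?c = "case_sum \<alpha> (\<lambda>j. t * \<beta> j)" and ?u = "case_sum p q"
  have "0 \<le> (\<Sum>a\<in>I <+> J. \<Sum>b\<in>I <+> J. ?c a * ?c b * k (?u a) (?u b))"
    using assms(1,3,4) by (intro psd_kernel_sum) auto
  also have "\<dots> = (\<Sum>i\<in>I. \<Sum>i'\<in>I. \<alpha> i * \<alpha> i' * k (p i) (p i'))
      + 2 * t * (\<Sum>i\<in>I. \<Sum>j\<in>J. \<alpha> i * \<beta> j * k (p i) (q j))
      + t\<^sup>2 * (\<Sum>j\<in>J. \<Sum>j'\<in>J. \<beta> j * \<beta> j' * k (q j) (q j'))"
    using assms(3,4)
    by (simp add: sum.Plus sum.distrib sum_distrib_left sum.swap[of _ J I] sym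
        algebra_simps power2_eq_square)
  finally show "0 \<le> \<dots>" .
qed

lemma rkhs_bound_kernel_sum:
  assumes "psd_kernel k" and sym: "\<And>p q. k p q = k q p" and "finite I"
  shows "rkhs_bound k (\<lambda>y. \<Sum>i\<in>I. \<alpha> i * k (p i) y)
           (\<Sum>i\<in>I. \<Sum>j\<in>I. \<alpha> i * \<alpha> j * k (p i) (p j))"
  unfolding rkhs_bound_def
proof (intro allI)
  fix n c and y :: "nat \<Rightarrow> 'a"
  have "(\<Sum>s<n. c s * (\<Sum>i\<in>I. \<alpha> i * k (p i) (y s))) = (\<Sum>i\<in>I. \<Sum>s<n. \<alpha> i * c s * k (p i) (y s))"
    by (simp add: sum_distrib_left sum.swap[of _ "{..<n}"] mult_ac)
  then show "(\<Sum>s<n. c s * (\<Sum>i\<in>I. \<alpha> i * k (p i) (y s)))\<^sup>2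
      \<le> (\<Sum>i\<in>I. \<Sum>j\<in>I. \<alpha> i * \<alpha> j * k (p i) (p j)) * (\<Sum>s<n. \<Sum>r<n. c s * c r * k (y s) (y r))"
    using psd_kernel_cauchy_schwarz[OF assms(1) sym assms(3) finite_lessThan] by simp
qed

lemma kernel_sum_le_rkhs_bound:
  assumes "psd_kernel k" and sym: "\<And>p q. k p q = k q p" and diag: "\<And>q. 0 < k q q"
    and "finite I" and bound: "rkhs_bound k (\<lambda>y. \<Sum>i\<in>I. \<alpha> i * k (p i) y) C"
  shows "(\<Sum>i\<in>I. \<Sum>j\<in>I. \<alpha> i * \<alpha> j * k (p i) (p j)) \<le> C"
proof -
  define Q where "Q = (\<Sum>i\<in>I. \<Sum>j\<in>I. \<alpha> i * \<alpha> j * k (p i) (p j))"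
  have "0 \<le> Q"
    unfolding Q_def using assms(1,4) by (rule psd_kernel_sum)
  have "0 \<le> C * k q q" for q
    using rkhs_bound_sum[OF bound, of "{q}" "\<lambda>_. 1" id] by (simp add: order.trans[OF zero_le_power2])
  then have "0 \<le> C"
    using diag by (meson zero_le_mult_iff not_le)
  have "(\<Sum>i\<in>I. \<alpha> i * (\<Sum>j\<in>I. \<alpha> j * k (p j) (p i))) = Q"
    by (simp add: Q_def sum_distrib_left sym mult_ac)
  then have "Q\<^sup>2 \<le> C * Q"
    using rkhs_bound_sum[OF bound assms(4), of \<alpha> p] by (simp add: Q_def)
  then show ?thesis
    using \<open>0 \<le> Q\<close> \<open>0 \<le> C\<close> unfolding Q_def[symmetric]
    by (cases "Q = 0") (auto simp: power2_eq_square mult_le_cancel_right)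
qed

lemma rkhs_norm_sq_kernel_sum:
  assumes "psd_kernel k" and "\<And>p q. k p q = k q p" and "\<And>q. 0 < k q q" and "finite I"
  shows "rkhs_norm_sq k (\<lambda>y. \<Sum>i\<in>I. \<alpha> i * k (p i) y)
       = (\<Sum>i\<in>I. \<Sum>j\<in>I. \<alpha> i * \<alpha> j * k (p i) (p j))"
  unfolding rkhs_norm_sq_def
  using rkhs_bound_kernel_sum[OF assms(1,2,4)] kernel_sum_le_rkhs_bound[OF assms]
  by (intro cInf_eq_minimum) auto

lemma gauss_kernel_commute: "gauss_kernel s p q = gauss_kernel s q p"
  by (simp add: gauss_kernel_def norm_minus_commute)

lemma gauss_kernel_same: "gauss_kernel s p p = 1"
  by (simp add: gauss_kernel_def)

lemma gauss_kernel_inner: "gauss_kernel s p q = exp (- ((p - q) \<bullet> (p - q)) / (2 * s\<^sup>2))"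
  for p q :: "'a::real_inner"
  by (simp add: gauss_kernel_def power2_norm_eq_inner)

lemma gauss_kernel_scaleR:
  assumes "r \<noteq> 0"
  shows "gauss_kernel (r * s) (r *\<^sub>R p) (r *\<^sub>R q) = gauss_kernel s p q"
  using assms
  by (simp add: gauss_kernel_def flip: scaleR_diff_right)
     (simp add: power_mult_distrib power2_abs)

lemma gauss_kernel_eq_square: "gauss_kernel \<sigma> p q = (gauss_kernel (sqrt 2 * \<sigma>) p q)\<^sup>2"
  by (simp add: gauss_kernel_def power_mult_distrib flip: exp_double)

lemma psd_kernel_gauss_kernel:
  fixes \<phi> :: "'a::real_normed_vector \<Rightarrow> 'h::real_inner"
  assumes feat: "\<forall>p q. \<phi> p \<bullet> \<phi> q = gauss_kernel \<sigma> p q" and "\<sigma> \<noteq> 0" "s \<noteq> 0"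
  shows "psd_kernel (gauss_kernel s :: 'a \<Rightarrow> 'a \<Rightarrow> real)"
proof -
  have rescale: "gauss_kernel s p q = gauss_kernel \<sigma> ((\<sigma> / s) *\<^sub>R p) ((\<sigma> / s) *\<^sub>R q)" for p q
    using gauss_kernel_scaleR[of "\<sigma> / s" s p q] assms(2,3) by simp
  show ?thesis
    by (rule psd_kernel_compose[OF psd_kernel_inner[of \<phi>], where h = "\<lambda>p. (\<sigma> / s) *\<^sub>R p"])
      (simp add: rescale feat)
qed

lemma gauss_kernel_mult:
  fixes p q y :: "'a::real_inner"
  assumes "\<sigma> \<noteq> 0"
  shows "gauss_kernel \<sigma> p y * gauss_kernel \<sigma> q y
     = gauss_kernel (sqrt 2 * \<sigma>) p q * gauss_kernel (\<sigma> / sqrt 2) ((1/2) *\<^sub>R (p + q)) y"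
  using assms
  by (simp add: gauss_kernel_inner exp_add[symmetric] power_mult_distrib power_divide field_simps
      inner_diff_left inner_diff_right inner_add_left inner_add_right inner_commute)

(* Comparing exponents: |p-q|^2 + |r-s|^2 + |p+q-r-s|^2 = |p-r|^2 + |r-q|^2 + |q-s|^2 + |s-p|^2 *)
lemma gauss_kernel_four_cycle:
  fixes p q r s :: "'a::real_inner"
  assumes "\<sigma> \<noteq> 0"
  shows "gauss_kernel (sqrt 2 * \<sigma>) p q * gauss_kernel (sqrt 2 * \<sigma>) r s
      * gauss_kernel (\<sigma> / sqrt 2) ((1/2) *\<^sub>R (p + q)) ((1/2) *\<^sub>R (r + s))
    = gauss_kernel (sqrt 2 * \<sigma>) p r * gauss_kernel (sqrt 2 * \<sigma>) r q
      * gauss_kernel (sqrt 2 * \<sigma>) q s * gauss_kernel (sqrt 2 * \<sigma>) s p"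
  using assms
  by (simp add: gauss_kernel_inner exp_add[symmetric] power_mult_distrib power_divide field_simps
      inner_diff_left inner_diff_right inner_add_left inner_add_right inner_commute)

lemma rkhs_norm_sq_gauss_kernel_sum:
  fixes x :: "nat \<Rightarrow> 'a::real_inner" and \<phi> :: "'a \<Rightarrow> 'h::real_inner"
    and a :: "nat \<Rightarrow> real" and m :: nat
  assumes feat: "\<forall>p q. \<phi> p \<bullet> \<phi> q = gauss_kernel (sqrt 2 * \<sigma>) p q" and "\<sigma> \<noteq> 0"
  defines "A \<equiv> outer_sum {..<m} (\<lambda>i. a i *\<^sub>R \<phi> (x i)) (\<lambda>i. \<phi> (x i))"
  shows "rkhs_norm_sq (gauss_kernel \<sigma>) (\<lambda>y. \<Sum>i<m. a i * gauss_kernel \<sigma> (x i) y)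
       = fr_trace (A \<circ> A)"
proof -
  have "psd_kernel (gauss_kernel \<sigma> :: 'a \<Rightarrow> 'a \<Rightarrow> real)"
    using psd_kernel_gauss_kernel[OF feat] assms(2) by simp
  then have "rkhs_norm_sq (gauss_kernel \<sigma>) (\<lambda>y. \<Sum>i<m. a i * gauss_kernel \<sigma> (x i) y)
      = (\<Sum>i<m. \<Sum>j<m. a i * a j * gauss_kernel \<sigma> (x i) (x j))"
    by (intro rkhs_norm_sq_kernel_sum) (auto simp: gauss_kernel_commute gauss_kernel_same)
  also have "\<dots> = fr_trace (A \<circ> A)"
    by (simp add: A_def outer_sum_comp fr_trace_outer_sum sum.cartesian_product' feat
        gauss_kernel_eq_square[of \<sigma>] power2_eq_square mult_ac gauss_kernel_commute)
  finally show ?thesis .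
qed

lemma rkhs_norm_sq_gauss_kernel_sum_mult:
  fixes x :: "nat \<Rightarrow> 'a::real_inner" and \<phi> :: "'a \<Rightarrow> 'h::real_inner"
    and a b :: "nat \<Rightarrow> real" and m :: nat
  assumes feat: "\<forall>p q. \<phi> p \<bullet> \<phi> q = gauss_kernel (sqrt 2 * \<sigma>) p q" and "\<sigma> \<noteq> 0"
  defines "A \<equiv> outer_sum {..<m} (\<lambda>i. a i *\<^sub>R \<phi> (x i)) (\<lambda>i. \<phi> (x i))"
    and "B \<equiv> outer_sum {..<m} (\<lambda>j. b j *\<^sub>R \<phi> (x j)) (\<lambda>j. \<phi> (x j))"
  shows "rkhs_norm_sq (gauss_kernel (\<sigma> / sqrt 2))
           (\<lambda>y. (\<Sum>i<m. a i * gauss_kernel \<sigma> (x i) y) * (\<Sum>j<m. b j * gauss_kernel \<sigma> (x j) y))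
       = fr_trace (A \<circ> A \<circ> B \<circ> B)"
proof -
  let ?K = "gauss_kernel (sqrt 2 * \<sigma>)" and ?k = "gauss_kernel (\<sigma> / sqrt 2)"
  define I where "I = {..<m} \<times> {..<m}"
  define \<alpha> where "\<alpha> = (\<lambda>(i, j). a i * b j * ?K (x i) (x j))"
  define c where "c = (\<lambda>(i, j). (1/2) *\<^sub>R (x i + x j))"
  have product: "(\<lambda>y. (\<Sum>i<m. a i * gauss_kernel \<sigma> (x i) y) * (\<Sum>j<m. b j * gauss_kernel \<sigma> (x j) y))
      = (\<lambda>y. \<Sum>P\<in>I. \<alpha> P * ?k (c P) y)"
    using assms(2)
    by (simp add: fun_eq_iff I_def \<alpha>_def c_def sum_product sum.cartesian_product' gauss_kernel_mult
        mult_ac)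
  have psd: "psd_kernel (?k :: 'a \<Rightarrow> 'a \<Rightarrow> real)"
    using psd_kernel_gauss_kernel[OF feat] assms(2) by simp
  have cycle: "\<alpha> (i, j) * \<alpha> (k, l) * ?k (c (i, j)) (c (k, l)) = a i * b j * a k * b l
      * (?K (x i) (x k) * ?K (x k) (x j) * ?K (x j) (x l) * ?K (x l) (x i))" for i j k l
  proof -
    have "\<alpha> (i, j) * \<alpha> (k, l) * ?k (c (i, j)) (c (k, l)) = a i * b j * a k * b l
        * (?K (x i) (x j) * ?K (x k) (x l) * ?k ((1/2) *\<^sub>R (x i + x j)) ((1/2) *\<^sub>R (x k + x l)))"
      by (simp add: \<alpha>_def c_def)
    then show ?thesis
      by (simp only: gauss_kernel_four_cycle[OF assms(2)])
  qed
  have "rkhs_norm_sq ?k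
        (\<lambda>y. (\<Sum>i<m. a i * gauss_kernel \<sigma> (x i) y) * (\<Sum>j<m. b j * gauss_kernel \<sigma> (x j) y))
      = (\<Sum>P\<in>I. \<Sum>Q\<in>I. \<alpha> P * \<alpha> Q * ?k (c P) (c Q))"
    unfolding product using psd
    by (intro rkhs_norm_sq_kernel_sum) (auto simp: I_def gauss_kernel_commute gauss_kernel_same)
  also have "\<dots> = (\<Sum>i<m. \<Sum>j<m. \<Sum>k<m. \<Sum>l<m. a i * b j * a k * b l
          * (?K (x i) (x k) * ?K (x k) (x j) * ?K (x j) (x l) * ?K (x l) (x i)))"
    by (simp add: I_def sum.cartesian_product' cycle)
  also have "\<dots> = (\<Sum>i<m. \<Sum>k<m. \<Sum>j<m. \<Sum>l<m. a i * b j * a k * b l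
          * (?K (x i) (x k) * ?K (x k) (x j) * ?K (x j) (x l) * ?K (x l) (x i)))"
    by (intro sum.cong refl sum.swap)
  also have "\<dots> = fr_trace (A \<circ> A \<circ> B \<circ> B)"
    by (simp add: A_def B_def outer_sum_comp fr_trace_outer_sum sum.cartesian_product' feat
        mult_ac gauss_kernel_commute)
  finally show ?thesis .
qed

theorem proposition1:
  fixes \<sigma> :: real and m :: nat
    and x :: "nat \<Rightarrow> real ^ 'd"
    and a b :: "nat \<Rightarrow> real"
    and \<phi> :: "real ^ 'd \<Rightarrow> 'h::real_inner"
    and f g :: "real ^ 'd \<Rightarrow> real"
    and z :: "nat \<Rightarrow> 'h"
    and A B :: "'h \<Rightarrow> 'h"
  assumes "\<sigma> > 0"
    and feat: "\<forall>p q. \<phi> p \<bullet> \<phi> q = gauss_kernel (sqrt 2 * \<sigma>) p q"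
    and f_def: "f = (\<lambda>y. \<Sum>i<m. a i * gauss_kernel \<sigma> (x i) y)"
    and g_def: "g = (\<lambda>y. \<Sum>j<m. b j * gauss_kernel \<sigma> (x j) y)"
    and z_def: "z = (\<lambda>i. \<phi> (x i))"
    and A_def: "A = (\<lambda>v. \<Sum>i<m. a i *\<^sub>R rank_one (z i) v)"
    and B_def: "B = (\<lambda>v. \<Sum>j<m. b j *\<^sub>R rank_one (z j) v)"
  shows "rkhs_norm_sq (gauss_kernel (\<sigma> / sqrt 2)) (\<lambda>y. f y * g y) = fr_trace (A \<circ> A \<circ> B \<circ> B)
       \<and> rkhs_norm_sq (gauss_kernel \<sigma>) f = fr_trace (A \<circ> A)
       \<and> rkhs_norm_sq (gauss_kernel \<sigma>) g = fr_trace (B \<circ> B)"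
proof -
  have "\<sigma> \<noteq> 0"
    using \<open>\<sigma> > 0\<close> by simp
  have A: "A = outer_sum {..<m} (\<lambda>i. a i *\<^sub>R \<phi> (x i)) (\<lambda>i. \<phi> (x i))"
    unfolding A_def z_def by (rule sum_rank_one_eq_outer_sum)
  have B: "B = outer_sum {..<m} (\<lambda>j. b j *\<^sub>R \<phi> (x j)) (\<lambda>j. \<phi> (x j))"
    unfolding B_def z_def by (rule sum_rank_one_eq_outer_sum)
  show ?thesis
    unfolding f_def g_def A B
    using rkhs_norm_sq_gauss_kernel_sum_mult[OF feat \<open>\<sigma> \<noteq> 0\<close>]
      rkhs_norm_sq_gauss_kernel_sum[OF feat \<open>\<sigma> \<noteq> 0\<close>]
    by simp
qed

end
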